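(* Let $K$ be a field and $S=\langle x_1,\ldots,x_n\rangle$ a right non-degenerate semigroup of skew type, $X=\{x_1,\ldots,x_n\}$. Then: (1) for each integer $i$ with $1\le i\le n$, the set $S_i=\bigcup_{Y\subseteq X,\,|Y|=i}S_Y$ is an ideal of $S$, and $S_X=S_n\subseteq S_{n-1}\subseteq\cdots\subseteq S_1\subseteq S$; (2) $S$ is the union of sets of the form $\{y_1^{a_1}\cdots y_k^{a_k}\mid a_i\ge0\}$, where $y_1,\ldots,y_k\in X$ and $k\le n$. In particular, $\mathrm{GK}(K[S])\le n$.
   Context: A semigroup of skew type is a monoid $S$ with a monoid presentation $S=\langle x_1,\ldots,x_n \mid x_ix_j=x_kx_l\rangle$ consisting of $\binom{n}{2}$ relations, each of the form $x_ix_j=x_kx_l$ with $i\neq j$, $k\neq l$, such that every word $x_px_q$ with $p\neq q$ appears (as one side) in exactly one of the relations. For $a,b\in X$, the partner of $ab$ is the other side of the unique defining relation containing $ab$ if $a\neq b$, and $ab$ itself if $a=b$. $S$ is right non-degenerate if for every $x\in X$ the map $X\to X$ sending $y$ to the first letter of the partner of $xy$ is surjective. For $Y\subseteq X$, $S_Y=\bigcap_{y\in Y}yS$. $\mathrm{GK}$ is Gelfand–Kirillov dimension. *)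

theory Defs
  imports Complex_Main "HOL-Library.Liminf_Limsup" "HOL-Library.Extended_Real"
begin

text \<open>A semigroup (monoid) of skew type on the generating set X is encoded by its
  partner function r: for a, b in X with a different from b, r(a,b) is the other side
  of the unique defining relation containing ab; r(a,a) = (a,a).\<close>

definition skew_type :: "'a set \<Rightarrow> ('a \<times> 'a \<Rightarrow> 'a \<times> 'a) \<Rightarrow> bool" where
  "skew_type X r \<longleftrightarrow> finite X \<and> (\<forall>a\<in>X. r (a,a) = (a,a)) \<and>
     (\<forall>a\<in>X. \<forall>b\<in>X. a \<noteq> b \<longrightarrow>
        fst (r (a,b)) \<in> X \<and> snd (r (a,b)) \<in> X \<and> fst (r (a,b)) \<noteq> snd (r (a,b)) \<and>
        r (a,b) \<noteq> (a,b) \<and> r (r (a,b)) = (a,b))"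

definition right_nondegenerate :: "'a set \<Rightarrow> ('a \<times> 'a \<Rightarrow> 'a \<times> 'a) \<Rightarrow> bool" where
  "right_nondegenerate X r \<longleftrightarrow> (\<forall>x\<in>X. (\<lambda>y. fst (r (x,y))) ` X = X)"

definition one_step :: "'a set \<Rightarrow> ('a \<times> 'a \<Rightarrow> 'a \<times> 'a) \<Rightarrow> ('a list \<times> 'a list) set" where
  "one_step X r = {(u @ [a,b] @ v, u @ [fst (r (a,b)), snd (r (a,b))] @ v) | u v a b.
      u \<in> lists X \<and> v \<in> lists X \<and> a \<in> X \<and> b \<in> X \<and> a \<noteq> b}"

definition word_eq :: "'a set \<Rightarrow> ('a \<times> 'a \<Rightarrow> 'a \<times> 'a) \<Rightarrow> ('a list \<times> 'a list) set" where
  "word_eq X r = (one_step X r \<union> (one_step X r)\<inverse>)\<^sup>*"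

definition cls :: "'a set \<Rightarrow> ('a \<times> 'a \<Rightarrow> 'a \<times> 'a) \<Rightarrow> 'a list \<Rightarrow> 'a list set" where
  "cls X r w = word_eq X r `` {w}"

text \<open>The monoid S = <X | ab = r(a,b)> as the set of congruence classes of words.\<close>
definition mon :: "'a set \<Rightarrow> ('a \<times> 'a \<Rightarrow> 'a \<times> 'a) \<Rightarrow> 'a list set set" where
  "mon X r = cls X r ` lists X"

definition is_ideal :: "'a set \<Rightarrow> ('a \<times> 'a \<Rightarrow> 'a \<times> 'a) \<Rightarrow> 'a list set set \<Rightarrow> bool" where
  "is_ideal X r I \<longleftrightarrow> I \<subseteq> mon X r \<and>
     (\<forall>u\<in>lists X. \<forall>v\<in>lists X. \<forall>w\<in>lists X. cls X r v \<in> I \<longrightarrow> cls X r (u @ v @ w) \<in> I)"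

definition left_mult_set :: "'a set \<Rightarrow> ('a \<times> 'a \<Rightarrow> 'a \<times> 'a) \<Rightarrow> 'a \<Rightarrow> 'a list set set" where
  "left_mult_set X r y = {cls X r (y # w) | w. w \<in> lists X}"

definition S_sub :: "'a set \<Rightarrow> ('a \<times> 'a \<Rightarrow> 'a \<times> 'a) \<Rightarrow> 'a set \<Rightarrow> 'a list set set" where
  "S_sub X r Y = {s \<in> mon X r. \<forall>y\<in>Y. s \<in> left_mult_set X r y}"

definition S_idx :: "'a set \<Rightarrow> ('a \<times> 'a \<Rightarrow> 'a \<times> 'a) \<Rightarrow> nat \<Rightarrow> 'a list set set" where
  "S_idx X r i = \<Union> {S_sub X r Y | Y. Y \<subseteq> X \<and> card Y = i}"

definition power_set_prod :: "'a set \<Rightarrow> ('a \<times> 'a \<Rightarrow> 'a \<times> 'a) \<Rightarrow> 'a list \<Rightarrow> 'a list set set" where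
  "power_set_prod X r ys = {cls X r (concat (map2 replicate as ys)) | as. length as = length ys}"

text \<open>Growth function of S with respect to X: number of elements of word length at most d.
  This equals dim_K V^d for the standard generating subspace V = K + KX of K[S].\<close>
definition growth :: "'a set \<Rightarrow> ('a \<times> 'a \<Rightarrow> 'a \<times> 'a) \<Rightarrow> nat \<Rightarrow> nat" where
  "growth X r d = card {cls X r w | w. w \<in> lists X \<and> length w \<le> d}"

text \<open>Gelfand-Kirillov dimension of the monoid algebra K[S] (independent of the field K):
  limsup of log(dim V^d)/log d.\<close>
definition GK_monoid_algebra :: "'a set \<Rightarrow> ('a \<times> 'a \<Rightarrow> 'a \<times> 'a) \<Rightarrow> ereal" where
  "GK_monoid_algebra X r = limsup (\<lambda>d. ereal (ln (real (growth X r d)) / ln (real d)))"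

end

theory Submission
  imports Defs
begin

text \<open>For a word w let I(w) be the set of letters y with [w] \<in> yS, so that [w] lies in
  S_Y iff Y \<subseteq> I(w). For x \<in> X the first-letter map \<sigma> y = fst (r (x, y)) is a
  bijection of X fixing x, and it sends I(w) into I(xw); hence |I(w) \<union> {x}| \<le> |I(xw)|.
  So |I(w)| never decreases under left or right multiplication, which makes every
  S_i = {[w]. i \<le> |I(w)|} an ideal. The same inequality drives a normal form: for w = yt
  either y \<in> I(t), and then w = yyt' with yt' shorter than w, or |I(t)| < |I(w)|. By
  induction every w equals a product y_1^a_1 ... y_k^a_k with k \<le> |I(w)| \<le> n, and
  counting these products bounds the growth of S by a polynomial of degree n.\<close>

subsection \<open>The word congruence\<close>

lemma skew_type_finite: "skew_type X r \<Longrightarrow> finite X"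
  unfolding skew_type_def by blast

lemma skew_type_diag: "skew_type X r \<Longrightarrow> a \<in> X \<Longrightarrow> r (a, a) = (a, a)"
  unfolding skew_type_def by blast

lemma skew_type_partner_mem:
  assumes "skew_type X r" "a \<in> X" "b \<in> X" "a \<noteq> b"
  shows "fst (r (a, b)) \<in> X" "snd (r (a, b)) \<in> X"
  using assms unfolding skew_type_def by blast+

lemma one_step_lists:
  assumes "skew_type X r" "(u, v) \<in> one_step X r"
  shows "u \<in> lists X" "v \<in> lists X"
  using assms(2) skew_type_partner_mem[OF assms(1)] unfolding one_step_def by auto

lemma word_eq_lists:
  assumes "skew_type X r" "(u, v) \<in> word_eq X r" "u \<in> lists X"
  shows "v \<in> lists X"
  using assms(2,3) unfolding word_eq_def
  by (induct rule: rtrancl_induct) (auto dest: one_step_lists[OF assms(1)])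

lemma word_eq_length:
  assumes "(u, v) \<in> word_eq X r"
  shows "length u = length v"
  using assms unfolding word_eq_def one_step_def
  by (induct rule: rtrancl_induct) auto

lemma equiv_word_eq: "equiv UNIV (word_eq X r)"
  unfolding word_eq_def
  by (simp add: equiv_def refl_rtrancl sym_rtrancl sym_Un_converse trans_rtrancl)

lemma word_eq_refl: "(u, u) \<in> word_eq X r"
  unfolding word_eq_def by simp

lemma word_eq_sym: "(u, v) \<in> word_eq X r \<Longrightarrow> (v, u) \<in> word_eq X r"
  using equiv_word_eq[of X r] unfolding equiv_def by (blast dest: symD)

lemma word_eq_trans:
  "(u, v) \<in> word_eq X r \<Longrightarrow> (v, w) \<in> word_eq X r \<Longrightarrow> (u, w) \<in> word_eq X r"
  unfolding word_eq_def by (rule rtrancl_trans)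

lemma cls_eq_iff: "cls X r u = cls X r v \<longleftrightarrow> (u, v) \<in> word_eq X r"
  unfolding cls_def by (rule eq_equiv_class_iff[OF equiv_word_eq UNIV_I UNIV_I])

lemma one_step_context:
  assumes "(u, v) \<in> one_step X r" "p \<in> lists X" "q \<in> lists X"
  shows "(p @ u @ q, p @ v @ q) \<in> one_step X r"
proof -
  from assms(1) obtain u0 v0 a b where
    "u = u0 @ [a, b] @ v0" "v = u0 @ [fst (r (a, b)), snd (r (a, b))] @ v0"
    "u0 \<in> lists X" "v0 \<in> lists X" "a \<in> X" "b \<in> X" "a \<noteq> b"
    unfolding one_step_def by blast
  with assms(2,3) show ?thesis
    unfolding one_step_def by (intro CollectI exI[of _ "p @ u0"] exI[of _ "v0 @ q"]) auto
qed

lemma word_eq_context: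
  assumes "(u, v) \<in> word_eq X r" "p \<in> lists X" "q \<in> lists X"
  shows "(p @ u @ q, p @ v @ q) \<in> word_eq X r"
  using assms(1) unfolding word_eq_def
proof (induct rule: rtrancl_induct)
  case (step v w)
  then have "(p @ v @ q, p @ w @ q) \<in> one_step X r \<union> (one_step X r)\<inverse>"
    using one_step_context[OF _ assms(2,3)] by blast
  with step.hyps(3) show ?case by (rule rtrancl_into_rtrancl)
qed simp

lemma word_eq_Cons: "(u, v) \<in> word_eq X r \<Longrightarrow> x \<in> X \<Longrightarrow> (x # u, x # v) \<in> word_eq X r"
  using word_eq_context[of u v X r "[x]" "[]"] by simp

lemma word_eq_append: "(u, v) \<in> word_eq X r \<Longrightarrow> w \<in> lists X \<Longrightarrow> (u @ w, v @ w) \<in> word_eq X r"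
  using word_eq_context[of u v X r "[]" w] by simp

lemma word_eq_partner:
  assumes "x \<in> X" "y \<in> X" "x \<noteq> y" "t \<in> lists X"
  shows "(x # y # t, fst (r (x, y)) # snd (r (x, y)) # t) \<in> word_eq X r"
proof -
  have "([] @ [x, y] @ t, [] @ [fst (r (x, y)), snd (r (x, y))] @ t) \<in> one_step X r"
    unfolding one_step_def using assms by blast
  then show ?thesis unfolding word_eq_def by auto
qed

lemma inj_on_fst_partner:
  assumes "skew_type X r" "right_nondegenerate X r" "x \<in> X"
  shows "inj_on (\<lambda>y. fst (r (x, y))) X"
proof (rule eq_card_imp_inj_on)
  show "finite X" using assms(1) by (rule skew_type_finite)
  show "card ((\<lambda>y. fst (r (x, y))) ` X) = card X"
    using assms(2,3) unfolding right_nondegenerate_def by simp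
qed

subsection \<open>Initial letters\<close>

definition initial_letters :: "'a set \<Rightarrow> ('a \<times> 'a \<Rightarrow> 'a \<times> 'a) \<Rightarrow> 'a list \<Rightarrow> 'a set" where
  "initial_letters X r w = {y \<in> X. \<exists>t\<in>lists X. (w, y # t) \<in> word_eq X r}"

lemma initial_letters_subset: "initial_letters X r w \<subseteq> X"
  unfolding initial_letters_def by auto

lemma finite_initial_letters: "skew_type X r \<Longrightarrow> finite (initial_letters X r w)"
  using initial_letters_subset finite_subset skew_type_finite by metis

lemma card_initial_letters_le_card: "skew_type X r \<Longrightarrow> card (initial_letters X r w) \<le> card X"
  by (simp add: card_mono initial_letters_subset skew_type_finite)

lemma initial_letters_word_eq:
  "(w, w') \<in> word_eq X r \<Longrightarrow> initial_letters X r w = initial_letters X r w'"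
  unfolding initial_letters_def by (meson word_eq_sym word_eq_trans)

lemma initial_letters_Cons_self: "x \<in> X \<Longrightarrow> s \<in> lists X \<Longrightarrow> x \<in> initial_letters X r (x # s)"
  unfolding initial_letters_def using word_eq_refl by blast

lemma initial_letters_append:
  assumes "w \<in> lists X"
  shows "initial_letters X r s \<subseteq> initial_letters X r (s @ w)"
  unfolding initial_letters_def using assms word_eq_append by fastforce

lemma fst_partner_image_initial_letters:
  assumes "skew_type X r" "x \<in> X" "s \<in> lists X"
  shows "(\<lambda>y. fst (r (x, y))) ` initial_letters X r s \<subseteq> initial_letters X r (x # s)"
proof (rule image_subsetI)
  fix y assume "y \<in> initial_letters X r s"
  then obtain t where "y \<in> X" "t \<in> lists X" and yt: "(s, y # t) \<in> word_eq X r"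
    unfolding initial_letters_def by blast
  have xs: "(x # s, x # y # t) \<in> word_eq X r" using word_eq_Cons[OF yt \<open>x \<in> X\<close>] .
  show "fst (r (x, y)) \<in> initial_letters X r (x # s)"
  proof (cases "x = y")
    case True
    then have "fst (r (x, y)) = x" using skew_type_diag[OF assms(1,2)] by simp
    with xs True \<open>t \<in> lists X\<close> \<open>y \<in> X\<close> show ?thesis
      unfolding initial_letters_def by (auto intro!: bexI[of _ "y # t"])
  next
    case False
    with assms(1,2) \<open>y \<in> X\<close> have "fst (r (x, y)) \<in> X" "snd (r (x, y)) \<in> X"
      by (rule skew_type_partner_mem)+
    moreover have "(x # s, fst (r (x, y)) # snd (r (x, y)) # t) \<in> word_eq X r"
      using word_eq_trans[OF xs word_eq_partner[OF \<open>x \<in> X\<close> \<open>y \<in> X\<close> False \<open>t \<in> lists X\<close>]] .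
    ultimately show ?thesis using \<open>t \<in> lists X\<close>
      unfolding initial_letters_def by (auto intro!: bexI[of _ "snd (r (x, y)) # t"])
  qed
qed

lemma card_insert_initial_letters_le_Cons:
  assumes "skew_type X r" "right_nondegenerate X r" "x \<in> X" "s \<in> lists X"
  shows "card (insert x (initial_letters X r s)) \<le> card (initial_letters X r (x # s))"
proof -
  let ?\<sigma> = "\<lambda>y. fst (r (x, y))" and ?I = "initial_letters X r s"
  have "?\<sigma> x = x" using skew_type_diag[OF assms(1,3)] by simp
  then have "?\<sigma> ` insert x ?I \<subseteq> initial_letters X r (x # s)"
    using fst_partner_image_initial_letters[OF assms(1,3,4)] initial_letters_Cons_self[OF assms(3,4)]
    by auto
  moreover have "inj_on ?\<sigma> (insert x ?I)"
    using assms(3) initial_letters_subset[of X r s]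
    by (intro inj_on_subset[OF inj_on_fst_partner[OF assms(1-3)]]) auto
  ultimately have "card (?\<sigma> ` insert x ?I) \<le> card (initial_letters X r (x # s))"
    by (intro card_mono finite_initial_letters[OF assms(1)])
  then show ?thesis by (simp only: card_image[OF \<open>inj_on ?\<sigma> (insert x ?I)\<close>])
qed

lemma card_initial_letters_append_left:
  assumes "skew_type X r" "right_nondegenerate X r" "u \<in> lists X" "s \<in> lists X"
  shows "card (initial_letters X r s) \<le> card (initial_letters X r (u @ s))"
  using assms(3)
proof (induct u)
  case (Cons x u)
  then have "x \<in> X" "u \<in> lists X" by auto
  have "card (initial_letters X r (u @ s)) \<le> card (insert x (initial_letters X r (u @ s)))"
    using finite_initial_letters[OF assms(1)] by (simp add: card_mono subset_insertI)
  also have "\<dots> \<le> card (initial_letters X r (x # u @ s))"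
    using \<open>x \<in> X\<close> \<open>u \<in> lists X\<close> assms by (intro card_insert_initial_letters_le_Cons) auto
  finally show ?case using Cons \<open>u \<in> lists X\<close> by simp
qed simp

lemma card_initial_letters_append_right:
  assumes "skew_type X r" "w \<in> lists X"
  shows "card (initial_letters X r s) \<le> card (initial_letters X r (s @ w))"
  using assms by (intro card_mono finite_initial_letters initial_letters_append)

subsection \<open>Products of powers\<close>

abbreviation power_word :: "nat list \<Rightarrow> 'a list \<Rightarrow> 'a list" where
  "power_word as ys \<equiv> concat (map2 replicate as ys)"

lemma power_word_lists: "ys \<in> lists X \<Longrightarrow> power_word as ys \<in> lists X"
  by (auto dest!: set_zip_rightD)

lemma length_power_word: "length as = length ys \<Longrightarrow> length (power_word as ys) = sum_list as"
  by (induct as ys rule: list_induct2) auto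

lemma word_eq_power_word_Cons_hd:
  assumes "(v, power_word as ys) \<in> word_eq X r" "length as = length ys" "v \<noteq> []"
    and "hd ys = y" "y \<in> X"
  obtains as' where "length as' = length ys" "(y # v, power_word as' ys) \<in> word_eq X r"
proof -
  obtain ys' a as'' where ys: "ys = y # ys'" and as: "as = a # as''"
    using assms(2-4) word_eq_length[OF assms(1)] by (cases ys; cases as) auto
  show thesis
    using word_eq_Cons[OF assms(1,5)] assms(2) ys as by (intro that[of "Suc a # as''"]) auto
qed

lemma word_eq_power_word:
  assumes "skew_type X r" "right_nondegenerate X r"
  shows "w \<in> lists X \<Longrightarrow> \<exists>ys as. ys \<in> lists X \<and> length as = length ys
    \<and> length ys \<le> card (initial_letters X r w) \<and> hd ys = hd w
    \<and> (w, power_word as ys) \<in> word_eq X r"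
proof (induction w rule: length_induct)
  case (1 w)
  show ?case
  proof (cases w)
    case Nil
    then show ?thesis using word_eq_refl by (intro exI[of _ "[]"]) auto
  next
    case (Cons y t)
    with "1.prems" have "y \<in> X" "t \<in> lists X" by auto
    have card_w: "card (insert y (initial_letters X r t)) \<le> card (initial_letters X r w)"
      using card_insert_initial_letters_le_Cons[OF assms \<open>y \<in> X\<close> \<open>t \<in> lists X\<close>] Cons by simp
    show ?thesis
    proof (cases "y \<in> initial_letters X r t")
      case True
      then obtain t' where "t' \<in> lists X" and t': "(t, y # t') \<in> word_eq X r"
        unfolding initial_letters_def by blast
      have "length (y # t') < length w" using word_eq_length[OF t'] Cons by simp
      moreover have "y # t' \<in> lists X" using \<open>y \<in> X\<close> \<open>t' \<in> lists X\<close> by simp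
      ultimately obtain ys as where IH: "ys \<in> lists X"
        "length as = length ys" "length ys \<le> card (initial_letters X r (y # t'))"
        "hd ys = y" "(y # t', power_word as ys) \<in> word_eq X r"
        using "1.IH" by (metis list.sel(1))
      obtain as' where "length as' = length ys" and yyt': "(y # y # t', power_word as' ys) \<in> word_eq X r"
        using word_eq_power_word_Cons_hd[OF IH(5,2) _ IH(4) \<open>y \<in> X\<close>] by blast
      have "(w, y # y # t') \<in> word_eq X r" using word_eq_Cons[OF t' \<open>y \<in> X\<close>] Cons by simp
      then have "(w, power_word as' ys) \<in> word_eq X r" using yyt' by (rule word_eq_trans)
      moreover have "card (initial_letters X r (y # t')) \<le> card (initial_letters X r w)"
        using initial_letters_word_eq[OF t'] True card_w by (simp add: insert_absorb)
      ultimately show ?thesis using IH \<open>length as' = length ys\<close> Cons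
        by (intro exI[of _ ys] exI[of _ as']) auto
    next
      case False
      have "length t < length w" using Cons by simp
      with "1.IH" \<open>t \<in> lists X\<close> obtain ys as where IH: "ys \<in> lists X"
        "length as = length ys" "length ys \<le> card (initial_letters X r t)"
        "(t, power_word as ys) \<in> word_eq X r"
        by blast
      have "(w, power_word (1 # as) (y # ys)) \<in> word_eq X r"
        using word_eq_Cons[OF IH(4) \<open>y \<in> X\<close>] Cons by simp
      moreover have "length (y # ys) \<le> card (initial_letters X r w)"
        using IH(3) card_w False finite_initial_letters[OF assms(1)] by simp
      ultimately show ?thesis using IH \<open>y \<in> X\<close> Cons
        by (intro exI[of _ "y # ys"] exI[of _ "1 # as"]) auto
    qed
  qed
qed

lemma mon_eq_Union_power_set_prod:
  assumes "skew_type X r" "right_nondegenerate X r"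
  shows "mon X r = \<Union> {power_set_prod X r ys | ys. ys \<in> lists X \<and> length ys \<le> card X}"
proof (intro equalityI subsetI)
  fix s assume "s \<in> mon X r"
  then obtain w where s: "s = cls X r w" and "w \<in> lists X" unfolding mon_def by blast
  with word_eq_power_word[OF assms] obtain ys as where "ys \<in> lists X" "length as = length ys"
    and len: "length ys \<le> card (initial_letters X r w)" and w: "(w, power_word as ys) \<in> word_eq X r"
    by blast
  have "length ys \<le> card X" by (rule le_trans[OF len card_initial_letters_le_card[OF assms(1)]])
  moreover have "s \<in> power_set_prod X r ys"
    unfolding power_set_prod_def s cls_eq_iff[THEN iffD2, OF w] using \<open>length as = length ys\<close>
    by auto
  ultimately show "s \<in> \<Union> {power_set_prod X r ys | ys. ys \<in> lists X \<and> length ys \<le> card X}"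
    using \<open>ys \<in> lists X\<close> by blast
next
  fix s assume "s \<in> \<Union> {power_set_prod X r ys | ys. ys \<in> lists X \<and> length ys \<le> card X}"
  then obtain ys as where "ys \<in> lists X" and s: "s = cls X r (power_word as ys)"
    unfolding power_set_prod_def by auto
  show "s \<in> mon X r"
    unfolding mon_def s using power_word_lists[OF \<open>ys \<in> lists X\<close>] by (rule imageI)
qed

subsection \<open>The ideals S_i\<close>

lemma cls_mem_left_mult_set_iff:
  assumes "skew_type X r" "w \<in> lists X"
  shows "cls X r w \<in> left_mult_set X r y \<longleftrightarrow> y \<in> initial_letters X r w"
proof
  assume "cls X r w \<in> left_mult_set X r y"
  then obtain t where "t \<in> lists X" and "cls X r w = cls X r (y # t)"
    unfolding left_mult_set_def by blast
  then have wt: "(w, y # t) \<in> word_eq X r" by (simp add: cls_eq_iff)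
  moreover have "y \<in> X" using word_eq_lists[OF assms(1) wt assms(2)] by simp
  ultimately show "y \<in> initial_letters X r w"
    unfolding initial_letters_def using \<open>t \<in> lists X\<close> by blast
next
  assume "y \<in> initial_letters X r w"
  then obtain t where "t \<in> lists X" and "(w, y # t) \<in> word_eq X r"
    unfolding initial_letters_def by blast
  then show "cls X r w \<in> left_mult_set X r y"
    unfolding left_mult_set_def by (auto simp: cls_eq_iff)
qed

lemma cls_mem_S_sub_iff:
  assumes "skew_type X r" "w \<in> lists X"
  shows "cls X r w \<in> S_sub X r Y \<longleftrightarrow> Y \<subseteq> initial_letters X r w"
proof -
  have "cls X r w \<in> mon X r" unfolding mon_def using assms(2) by (rule imageI)
  then show ?thesis by (simp add: S_sub_def cls_mem_left_mult_set_iff[OF assms] subset_eq)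
qed

lemma cls_mem_S_idx_iff:
  assumes "skew_type X r" "w \<in> lists X"
  shows "cls X r w \<in> S_idx X r i \<longleftrightarrow> i \<le> card (initial_letters X r w)"
proof
  assume "cls X r w \<in> S_idx X r i"
  then obtain Y where "cls X r w \<in> S_sub X r Y" "card Y = i"
    unfolding S_idx_def by blast
  then show "i \<le> card (initial_letters X r w)"
    using card_mono[OF finite_initial_letters[OF assms(1)], of Y] cls_mem_S_sub_iff[OF assms]
    by simp
next
  assume "i \<le> card (initial_letters X r w)"
  then obtain Y where "Y \<subseteq> initial_letters X r w" "card Y = i"
    by (rule obtain_subset_with_card_n)
  moreover have "Y \<subseteq> X" using \<open>Y \<subseteq> initial_letters X r w\<close> initial_letters_subset by (rule order.trans)
  ultimately show "cls X r w \<in> S_idx X r i"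
    unfolding S_idx_def using cls_mem_S_sub_iff[OF assms, of Y] by blast
qed

lemma is_ideal_S_idx:
  assumes "skew_type X r" "right_nondegenerate X r"
  shows "is_ideal X r (S_idx X r i)"
  unfolding is_ideal_def
proof (intro conjI ballI impI)
  show "S_idx X r i \<subseteq> mon X r" unfolding S_idx_def S_sub_def by blast
next
  fix u v w assume "u \<in> lists X" "v \<in> lists X" "w \<in> lists X" and "cls X r v \<in> S_idx X r i"
  then have "i \<le> card (initial_letters X r v)" using cls_mem_S_idx_iff[OF assms(1)] by blast
  also have "\<dots> \<le> card (initial_letters X r (v @ w))"
    using card_initial_letters_append_right[OF assms(1) \<open>w \<in> lists X\<close>] .
  also have "\<dots> \<le> card (initial_letters X r (u @ v @ w))"
    using card_initial_letters_append_left[OF assms \<open>u \<in> lists X\<close>] \<open>v \<in> lists X\<close> \<open>w \<in> lists X\<close>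
    by simp
  finally show "cls X r (u @ v @ w) \<in> S_idx X r i"
    using cls_mem_S_idx_iff[OF assms(1)] \<open>u \<in> lists X\<close> \<open>v \<in> lists X\<close> \<open>w \<in> lists X\<close> by simp
qed

lemma S_idx_Suc_subset: "S_idx X r (Suc i) \<subseteq> S_idx X r i"
proof
  fix s assume "s \<in> S_idx X r (Suc i)"
  then obtain Y where Y: "Y \<subseteq> X" "card Y = Suc i" "s \<in> S_sub X r Y" unfolding S_idx_def by blast
  then obtain Y' where "Y' \<subseteq> Y" "card Y' = i" using obtain_subset_with_card_n[of i Y] by auto
  with Y show "s \<in> S_idx X r i" unfolding S_idx_def S_sub_def by blast
qed

lemma S_sub_eq_S_idx_card:
  assumes "finite X"
  shows "S_sub X r X = S_idx X r (card X)"
  unfolding S_idx_def using card_subset_eq[OF assms] by blast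

subsection \<open>Growth\<close>

lemma growth_pos:
  assumes "finite X"
  shows "0 < growth X r d"
proof -
  have "{cls X r w | w. w \<in> lists X \<and> length w \<le> d} = cls X r ` {w. set w \<subseteq> X \<and> length w \<le> d}"
    by auto
  then have "finite {cls X r w | w. w \<in> lists X \<and> length w \<le> d}"
    using finite_lists_length_le[OF assms] by simp
  moreover have "cls X r [] \<in> {cls X r w | w. w \<in> lists X \<and> length w \<le> d}" by auto
  ultimately show ?thesis unfolding growth_def by (auto simp: card_gt_0_iff)
qed

lemma card_lists_atMost_length_le_bound:
  "card {as. set as \<subseteq> {..d} \<and> length as \<le> n} \<le> (n + 1) * Suc d ^ n"
proof -
  have "card {as. set as \<subseteq> {..d} \<and> length as \<le> n} = (\<Sum>i\<le>n. Suc d ^ i)"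
    using card_lists_length_le[of "{..d}" n] by simp
  also have "\<dots> \<le> (n + 1) * Suc d ^ n"
    using sum_bounded_above[of "{..n}" "\<lambda>i. Suc d ^ i" "Suc d ^ n"] by (simp add: power_increasing)
  finally show ?thesis .
qed

lemma growth_le_polynomial:
  assumes "skew_type X r" "right_nondegenerate X r"
  obtains K where "\<And>d. growth X r d \<le> K * Suc d ^ card X"
proof -
  define L where "L = {ys. set ys \<subseteq> X \<and> length ys \<le> card X}"
  have "finite L" unfolding L_def using finite_lists_length_le[OF skew_type_finite[OF assms(1)]] .
  have "growth X r d \<le> ((card X + 1) * card L) * Suc d ^ card X" for d
  proof -
    define A where "A = {as. set as \<subseteq> {..d} \<and> length as \<le> card X}"
    have "finite A" unfolding A_def using finite_lists_length_le[of "{..d}"] by simp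
    define F where "F = (\<lambda>(as, ys). cls X r (power_word as ys))"
    have "{cls X r w | w. w \<in> lists X \<and> length w \<le> d} \<subseteq> F ` (A \<times> L)"
    proof (rule subsetI)
      fix s assume "s \<in> {cls X r w | w. w \<in> lists X \<and> length w \<le> d}"
      then obtain w where s: "s = cls X r w" and "w \<in> lists X" "length w \<le> d" by blast
      with word_eq_power_word[OF assms] obtain ys as where "ys \<in> lists X" "length as = length ys"
        and len: "length ys \<le> card (initial_letters X r w)"
        and w: "(w, power_word as ys) \<in> word_eq X r"
        by blast
      have "length ys \<le> card X" by (rule le_trans[OF len card_initial_letters_le_card[OF assms(1)]])
      have "sum_list as = length w"
        using length_power_word[OF \<open>length as = length ys\<close>] word_eq_length[OF w] by simp
      then have "set as \<subseteq> {..d}" using \<open>length w \<le> d\<close> member_le_sum_list by fastforce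
      then have "(as, ys) \<in> A \<times> L"
        unfolding A_def L_def using \<open>ys \<in> lists X\<close> \<open>length as = length ys\<close> \<open>length ys \<le> card X\<close>
        by auto
      moreover have "s = F (as, ys)" unfolding F_def s using w by (simp add: cls_eq_iff)
      ultimately show "s \<in> F ` (A \<times> L)" by (rule rev_image_eqI)
    qed
    then have "growth X r d \<le> card (F ` (A \<times> L))"
      unfolding growth_def using \<open>finite A\<close> \<open>finite L\<close> by (intro card_mono) auto
    also have "\<dots> \<le> card A * card L"
      using card_image_le[of "A \<times> L" F] \<open>finite A\<close> \<open>finite L\<close> by (simp add: card_cartesian_product)
    also have "\<dots> \<le> (card X + 1) * Suc d ^ card X * card L"
      unfolding A_def by (intro mult_right_mono card_lists_atMost_length_le_bound) simp
    finally show ?thesis by (simp only: ac_simps)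
  qed
  then show thesis by (rule that)
qed

lemma limsup_ln_ratio_le_of_polynomial_bound:
  fixes f :: "nat \<Rightarrow> nat"
  assumes pos: "\<And>d. 0 < f d" and bound: "\<And>d. f d \<le> K * Suc d ^ n"
  shows "limsup (\<lambda>d. ereal (ln (real (f d)) / ln (real d))) \<le> ereal (real n)"
proof -
  have "0 < K" using pos[of 0] bound[of 0] by (cases K) auto
  define C where "C = ln (real K) + real n * ln 2"
  define g where "g = (\<lambda>d::nat. C / ln (real d) + real n)"
  have le: "ln (real (f d)) / ln (real d) \<le> g d" if "d \<ge> 2" for d
  proof -
    have "ln (real (f d)) \<le> ln (real K * (real d + 1) ^ n)"
      using pos[of d] bound[of d] \<open>0 < K\<close>
      by (subst ln_le_cancel_iff) (auto simp: add.commute simp flip: of_nat_Suc of_nat_power of_nat_mult)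
    also have "\<dots> = ln (real K) + real n * ln (real d + 1)"
      using \<open>0 < K\<close> by (simp add: ln_mult ln_realpow)
    also have "\<dots> \<le> ln (real K) + real n * ln (2 * real d)"
      using that by (intro add_left_mono mult_left_mono) auto
    also have "\<dots> = C + real n * ln (real d)"
      using that by (simp add: C_def ln_mult algebra_simps)
    finally have "ln (real (f d)) / ln (real d) \<le> (C + real n * ln (real d)) / ln (real d)"
      using that by (intro divide_right_mono) auto
    also have "\<dots> = g d" using that by (simp add: g_def add_divide_distrib)
    finally show ?thesis .
  qed
  have "g \<longlonglongrightarrow> 0 + real n"
    unfolding g_def
    by (intro tendsto_add tendsto_const tendsto_divide_0[OF tendsto_const]
        filterlim_at_top_imp_at_infinity filterlim_compose[OF ln_at_top filterlim_real_sequentially])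
  then have "limsup (\<lambda>d. ereal (g d)) = ereal (real n)"
    by (intro lim_imp_Limsup) auto
  moreover have "limsup (\<lambda>d. ereal (ln (real (f d)) / ln (real d))) \<le> limsup (\<lambda>d. ereal (g d))"
    by (intro Limsup_mono) (use le in \<open>auto simp: eventually_sequentially intro!: exI[of _ 2]\<close>)
  ultimately show ?thesis by simp
qed

theorem theorem4p1:
  fixes X :: "'a set" and r :: "'a \<times> 'a \<Rightarrow> 'a \<times> 'a" and n :: nat
  assumes "skew_type X r" and "right_nondegenerate X r" and "n = card X"
  shows "(\<forall>i. 1 \<le> i \<and> i \<le> n \<longrightarrow> is_ideal X r (S_idx X r i))
    \<and> S_sub X r X = S_idx X r n
    \<and> (\<forall>i. 1 \<le> i \<and> i < n \<longrightarrow> S_idx X r (i + 1) \<subseteq> S_idx X r i)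
    \<and> S_idx X r 1 \<subseteq> mon X r
    \<and> mon X r = \<Union> {power_set_prod X r ys | ys. ys \<in> lists X \<and> length ys \<le> n}
    \<and> GK_monoid_algebra X r \<le> ereal (real n)"
proof (intro conjI allI impI)
  show ideal: "is_ideal X r (S_idx X r i)" for i
    using is_ideal_S_idx[OF assms(1,2)] .
  show "S_sub X r X = S_idx X r n"
    using S_sub_eq_S_idx_card[OF skew_type_finite[OF assms(1)]] assms(3) by simp
  show "S_idx X r (i + 1) \<subseteq> S_idx X r i" for i
    using S_idx_Suc_subset by simp
  show "S_idx X r 1 \<subseteq> mon X r"
    using ideal unfolding is_ideal_def by blast
  show "mon X r = \<Union> {power_set_prod X r ys | ys. ys \<in> lists X \<and> length ys \<le> n}"
    using mon_eq_Union_power_set_prod[OF assms(1,2)] assms(3) by simp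
  obtain K where "\<And>d. growth X r d \<le> K * Suc d ^ n"
    using growth_le_polynomial[OF assms(1,2)] assms(3) by metis
  then show "GK_monoid_algebra X r \<le> ereal (real n)"
    unfolding GK_monoid_algebra_def
    by (rule limsup_ln_ratio_le_of_polynomial_bound[OF growth_pos[OF skew_type_finite[OF assms(1)]]])
qed

end
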